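(* Let $t\in\mathbb{Z}_+$ and $\alpha\in(0,1)$. Let $\mathcal{Q}_1,\dots,\mathcal{Q}_t$ be probability distributions on $\mathbb{R}$ with continuous CDFs $F_1,\dots,F_t$. Let $\mathcal{D}_1,\dots,\mathcal{D}_t$ be independent datasets, where $\mathcal{D}_j=\{u_{j,i}\}_{i=1}^{B_j}$ consists of $B_j\ge 1$ i.i.d. samples from $\mathcal{Q}_j$. Suppose $1\le i\le k\le t$ and $\delta\in(0,1)$. Then with probability at least $1-\delta$, $$\big|\widehat{F}_{t,i}(\widehat{q}_{t,k})-(1-\alpha)\big|\le \frac{12}{5}\phi(t,k)+\frac{6}{5}\psi(t,k,\delta/2)+\frac{4}{5}\psi(t,i,\delta/2).$$
   Context: For a CDF $F$ and $\gamma\in(0,1)$, the left $\gamma$-quantile is $\mathsf{Q}^-_\gamma(F)=\inf\{x\in\mathbb{R}:F(x)\ge\gamma\}$. For $m\in\{1,\dots,t\}$ let $B_{t,m}=\sum_{j=t-m+1}^t B_j$ and $\widehat{F}_{t,m}(x)=\frac{1}{B_{t,m}}\sum_{j=t-m+1}^t\sum_{l=1}^{B_j}\mathbf{1}\{x\ge u_{j,l}\}$. Define $\widehat{q}_{t,m}=\mathsf{Q}^-_{1-\alpha}(\widehat{F}_{t,m})$, $\phi(t,m)=\max_{t-m+1\le j\le t}\|F_j-F_t\|_\infty$, and $\psi(t,m,\delta)=\frac{5}{4}\sqrt{\frac{2\alpha(1-\alpha)\log(2/\delta)}{B_{t,m}}}+\frac{4\log(2/\delta)}{B_{t,m}}$.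 *)

theory Defs
  imports "HOL-Probability.Probability"
begin

definition left_quantile :: "(real \<Rightarrow> real) \<Rightarrow> real \<Rightarrow> real" where
  "left_quantile F \<gamma> = Inf {x. F x \<ge> \<gamma>}"

definition Bwin :: "(nat \<Rightarrow> nat) \<Rightarrow> nat \<Rightarrow> nat \<Rightarrow> nat" where
  "Bwin B t m = (\<Sum>j\<in>{t-m+1..t}. B j)"

text \<open>Empirical CDF over the window, for realised sample values w j l (dataset j, sample l).\<close>
definition emp_cdf :: "(nat \<Rightarrow> nat) \<Rightarrow> (nat \<Rightarrow> nat \<Rightarrow> real) \<Rightarrow> nat \<Rightarrow> nat \<Rightarrow> real \<Rightarrow> real" where
  "emp_cdf B w t m x =
     (1 / real (Bwin B t m)) *
       (\<Sum>j\<in>{t-m+1..t}. \<Sum>l\<in>{1..B j}. (if x \<ge> w j l then 1 else 0))"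

definition emp_quantile :: "(nat \<Rightarrow> nat) \<Rightarrow> (nat \<Rightarrow> nat \<Rightarrow> real) \<Rightarrow> real \<Rightarrow> nat \<Rightarrow> nat \<Rightarrow> real" where
  "emp_quantile B w \<alpha> t m = left_quantile (emp_cdf B w t m) (1 - \<alpha>)"

definition sup_dist :: "(real \<Rightarrow> real) \<Rightarrow> (real \<Rightarrow> real) \<Rightarrow> real" where
  "sup_dist F G = (SUP x. \<bar>F x - G x\<bar>)"

definition phi :: "(nat \<Rightarrow> real \<Rightarrow> real) \<Rightarrow> nat \<Rightarrow> nat \<Rightarrow> real" where
  "phi F t m = Max ((\<lambda>j. sup_dist (F j) (F t)) ` {t-m+1..t})"

definition psi :: "(nat \<Rightarrow> nat) \<Rightarrow> real \<Rightarrow> nat \<Rightarrow> nat \<Rightarrow> real \<Rightarrow> real" where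
  "psi B \<alpha> t m \<delta> =
     5/4 * sqrt (2 * \<alpha> * (1 - \<alpha>) * ln (2 / \<delta>) / real (Bwin B t m))
     + 4 * ln (2 / \<delta>) / real (Bwin B t m)"

end

(* Write Fbar_m for the pooled CDF of window m, the average of the F_j over its samples; it is the
   mean of the empirical CDF of the window, and for i <= k both Fbar_i and Fbar_k are within
   phi(t,k) of F_t. By continuity pick x- and x+ with Fbar_k(x-/+) = 1 - alpha -/+ eps_k. The indicators
   [u <= x] are independent Bernoulli variables whose variances sum to at most
   B (alpha (1 - alpha) + |Fbar(x) - (1 - alpha)|), so Bernstein's inequality bounds, with
   probability delta/4 each, the four events where the empirical CDF of window k or i at x-/+
   deviates from its mean by more than eps_k or eps_i. Off these events x- <= q <= x+ for the
   empirical quantile q of window k, and monotonicity of the empirical CDF of window i sandwiches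
   its value at q within eps_k + 2 phi + eps_i of 1 - alpha. The radius eps_k is chosen so that the
   Bernstein radius for variance proxy alpha (1 - alpha) + eps_k does not exceed eps_k itself. *)

theory Submission
  imports Defs
begin

lemma two_mult_three_power_le_fact: "2 * 3 ^ n \<le> (fact (n + 2) :: real)"
proof (induction n)
  case 0
  then show ?case by simp
next
  case (Suc n)
  have "fact (Suc n + 2) = (real n + 3) * (fact (n + 2) :: real)"
    by (simp add: algebra_simps)
  also have "\<dots> \<ge> 3 * (2 * 3 ^ n)"
    using Suc by (intro mult_mono) auto
  finally show ?case by simp
qed

lemma exp_le_quadratic_bound:
  fixes z :: real
  assumes "\<bar>z\<bar> < 3"
  shows "exp z \<le> 1 + z + z\<^sup>2 / (2 * (1 - \<bar>z\<bar> / 3))"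
proof -
  have "(\<lambda>n. z ^ n / fact n) sums exp z"
    using exp_converges[of z] by (simp add: divide_inverse mult.commute)
  then have tail: "(\<lambda>n. z ^ (n + 2) / fact (n + 2)) sums (exp z - 1 - z)"
    by (subst sums_iff_shift) (simp add: numeral_2_eq_2)
  have "(\<lambda>n. (\<bar>z\<bar> / 3) ^ n) sums (1 / (1 - \<bar>z\<bar> / 3))"
    by (rule geometric_sums) (use assms in auto)
  then have geom: "(\<lambda>n. z\<^sup>2 / 2 * (\<bar>z\<bar> / 3) ^ n) sums (z\<^sup>2 / 2 * (1 / (1 - \<bar>z\<bar> / 3)))"
    by (rule sums_mult)
  have "z ^ (n + 2) / fact (n + 2) \<le> z\<^sup>2 / 2 * (\<bar>z\<bar> / 3) ^ n" for n
  proof -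
    have "z ^ (n + 2) / fact (n + 2) \<le> \<bar>z\<bar> ^ (n + 2) / fact (n + 2)"
      using abs_ge_self[of "z ^ (n + 2)"]
      by (intro divide_right_mono) (simp_all only: power_abs fact_ge_zero)
    also have "\<dots> \<le> \<bar>z\<bar> ^ (n + 2) / (2 * 3 ^ n)"
      by (intro divide_left_mono two_mult_three_power_le_fact) auto
    also have "\<dots> = z\<^sup>2 / 2 * (\<bar>z\<bar> / 3) ^ n"
      by (simp add: power_add power_divide power2_abs power2_eq_square)
    finally show ?thesis .
  qed
  then have "exp z - 1 - z \<le> z\<^sup>2 / 2 * (1 / (1 - \<bar>z\<bar> / 3))"
    using tail geom by (rule sums_le)
  then show ?thesis by (simp add: field_simps)
qed

lemma Bernoulli_mgf_le:
  fixes p l :: real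
  assumes p: "0 \<le> p" "p \<le> 1" and l: "0 \<le> l" "l < 3"
  shows "(1 - p) * exp (- l * p) + p * exp (l * (1 - p))
           \<le> exp (p * (1 - p) * (l\<^sup>2 / (2 * (1 - l / 3))))"
proof -
  define c where "c = l\<^sup>2 / (2 * (1 - l / 3))"
  have exp_le: "exp (l * y) \<le> 1 + l * y + y\<^sup>2 * c" if "\<bar>y\<bar> \<le> 1" for y
  proof -
    have ly: "\<bar>l * y\<bar> \<le> l"
      using that l by (simp add: abs_mult mult_left_le)
    then have "exp (l * y) \<le> 1 + l * y + (l * y)\<^sup>2 / (2 * (1 - \<bar>l * y\<bar> / 3))"
      using l by (intro exp_le_quadratic_bound) linarith
    also have "(l * y)\<^sup>2 / (2 * (1 - \<bar>l * y\<bar> / 3)) \<le> (l * y)\<^sup>2 / (2 * (1 - l / 3))"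
      using ly l by (intro divide_left_mono) (auto intro!: mult_pos_pos)
    also have "\<dots> = y\<^sup>2 * c"
      by (simp add: c_def power_mult_distrib)
    finally show ?thesis by simp
  qed
  have "(1 - p) * exp (- l * p) + p * exp (l * (1 - p))
        \<le> (1 - p) * (1 - l * p + p\<^sup>2 * c) + p * (1 + l * (1 - p) + (1 - p)\<^sup>2 * c)"
    using p exp_le[of "- p"] exp_le[of "1 - p"] by (intro add_mono mult_left_mono) auto
  also have "\<dots> = 1 + p * (1 - p) * c"
    by (simp add: algebra_simps power2_eq_square)
  also have "\<dots> \<le> exp (p * (1 - p) * c)"
    by (rule exp_ge_add_one_self[unfolded add.commute[of _ 1]])
  finally show ?thesis by (simp add: c_def)
qed

lemma Bernstein_exponent_at_optimum:
  fixes V thr :: real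
  assumes V: "V > 0" and thr: "thr > 0"
  defines "l \<equiv> thr / (V + thr / 3)"
  shows "0 < l" "l < 3" "V * (l\<^sup>2 / (2 * (1 - l / 3))) - l * thr = - thr\<^sup>2 / (2 * (V + thr / 3))"
proof -
  define D where "D = V + thr / 3"
  have D: "D > 0" "l = thr / D"
    using V thr by (simp_all add: D_def l_def)
  show "0 < l" "l < 3"
    unfolding l_def using V thr by (simp_all add: field_simps)
  have "1 - l / 3 = V / D"
    using D by (simp add: D_def field_simps)
  then have "V * (l\<^sup>2 / (2 * (1 - l / 3))) = V * ((thr / D)\<^sup>2 / (2 * (V / D)))"
    by (simp add: D)
  also have "\<dots> = thr\<^sup>2 / (2 * D)"
    using D V by (simp add: power2_eq_square field_simps)
  finally have quadratic: "V * (l\<^sup>2 / (2 * (1 - l / 3))) = thr\<^sup>2 / (2 * D)" .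
  have linear: "l * thr = thr\<^sup>2 / D"
    using D by (simp add: power2_eq_square)
  show "V * (l\<^sup>2 / (2 * (1 - l / 3))) - l * thr = - thr\<^sup>2 / (2 * (V + thr / 3))"
    unfolding D_def[symmetric] quadratic linear using D by (simp add: field_simps)
qed

lemma Bernstein_exponent_exists:
  fixes V L thr :: real
  assumes V: "V \<ge> 0" and L: "L > 0" and thr: "sqrt (2 * V * L) + 2 * L / 3 \<le> thr"
  shows "\<exists>l. 0 < l \<and> l < 3 \<and> V * (l\<^sup>2 / (2 * (1 - l / 3))) - l * thr \<le> - L"
proof (cases "V = 0")
  case True
  then show ?thesis
    using thr L by (intro exI[of _ "3 / 2"]) auto
next
  case False
  then have "V > 0" using V by simp
  have "0 \<le> sqrt (2 * V * L)"
    using V L by simp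
  then have thr_ge: "2 * L / 3 \<le> thr"
    using thr by linarith
  have "(sqrt (2 * V * L))\<^sup>2 \<le> (thr - 2 * L / 3)\<^sup>2"
    using thr V L by (intro power_mono) auto
  then have "2 * V * L \<le> (thr - 2 * L / 3)\<^sup>2"
    using V L by simp
  moreover have "2 * L / 3 * (2 * L / 3) \<le> thr * (2 * L / 3)"
    using thr_ge L by (intro mult_right_mono) auto
  ultimately have "2 * L * (V + thr / 3) \<le> thr\<^sup>2"
    by (simp add: power2_eq_square algebra_simps)
  then have "- thr\<^sup>2 / (2 * (V + thr / 3)) \<le> - L"
    using \<open>V > 0\<close> thr_ge L by (simp add: field_simps)
  then show ?thesis
    using Bernstein_exponent_at_optimum[OF \<open>V > 0\<close>, of thr] thr_ge L by force
qed

definition Bernstein_radius :: "real \<Rightarrow> real \<Rightarrow> real \<Rightarrow> real" where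
  "Bernstein_radius n v L = sqrt (2 * v * L / n) + 2 / 3 * (L / n)"

context prob_space
begin

lemma binary_rv_integrable_expectation:
  fixes Y :: "'a \<Rightarrow> real"
  assumes [measurable]: "Y \<in> borel_measurable M"
    and binary: "\<And>\<omega>. \<omega> \<in> space M \<Longrightarrow> Y \<omega> = 0 \<or> Y \<omega> = 1"
  shows "integrable M Y" "0 \<le> expectation Y" "expectation Y \<le> 1"
proof -
  have bounds: "0 \<le> Y \<omega>" "Y \<omega> \<le> 1" if "\<omega> \<in> space M" for \<omega>
    using binary[OF that] by auto
  show int: "integrable M Y"
    using bounds by (intro integrable_const_bound[where B = 1]) (auto intro!: AE_I2)
  show "0 \<le> expectation Y"
    using bounds by (intro integral_nonneg_AE AE_I2) auto
  have "expectation Y \<le> expectation (\<lambda>_. 1)"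
    using bounds by (intro integral_mono[OF int]) auto
  then show "expectation Y \<le> 1" by (simp add: prob_space)
qed

lemma prob_le_add_if_subset_Un:
  assumes "A \<subseteq> E\<^sub>1 \<union> E\<^sub>2" "E\<^sub>1 \<in> events" "E\<^sub>2 \<in> events"
  shows "prob A \<le> prob E\<^sub>1 + prob E\<^sub>2"
  using finite_measure_mono[OF assms(1)] measure_Un_le[OF assms(2,3)] assms(2,3) by auto

lemma binary_rv_mgf_le:
  fixes Y :: "'a \<Rightarrow> real"
  assumes [measurable]: "Y \<in> borel_measurable M"
    and binary: "\<And>\<omega>. \<omega> \<in> space M \<Longrightarrow> Y \<omega> = 0 \<or> Y \<omega> = 1"
    and l: "0 \<le> l" "l < 3"
  shows "(\<integral>\<^sup>+\<omega>. ennreal (exp (l * (Y \<omega> - expectation Y))) \<partial>M)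
           \<le> ennreal (exp (expectation Y * (1 - expectation Y) * (l\<^sup>2 / (2 * (1 - l / 3)))))"
proof -
  define p where "p = expectation Y"
  note Y = binary_rv_integrable_expectation[OF assms(1) binary]
  define g where "g \<omega> = exp (- l * p) + (exp (l * (1 - p)) - exp (- l * p)) * Y \<omega>" for \<omega>
  have exp_eq: "exp (l * (Y \<omega> - p)) = g \<omega>" if "\<omega> \<in> space M" for \<omega>
    using binary[OF that] by (auto simp: g_def algebra_simps)
  have "(\<integral>\<^sup>+\<omega>. ennreal (exp (l * (Y \<omega> - p))) \<partial>M) = (\<integral>\<^sup>+\<omega>. ennreal (g \<omega>) \<partial>M)"
    by (intro nn_integral_cong) (simp add: exp_eq)
  also have "\<dots> = ennreal (integral\<^sup>L M g)"
    using Y(1) exp_eq by (intro nn_integral_eq_integral AE_I2) (auto simp: g_def, metis exp_ge_zero)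
  also have "integral\<^sup>L M g = exp (- l * p) + (exp (l * (1 - p)) - exp (- l * p)) * p"
    unfolding g_def using Y(1) by (simp add: p_def prob_space)
  also have "\<dots> = (1 - p) * exp (- l * p) + p * exp (l * (1 - p))"
    by (simp add: algebra_simps)
  also have "ennreal \<dots> \<le> ennreal (exp (p * (1 - p) * (l\<^sup>2 / (2 * (1 - l / 3)))))"
    using Y l by (intro ennreal_leI Bernoulli_mgf_le) (auto simp: p_def)
  finally show ?thesis by (simp add: p_def)
qed

lemma indep_binary_sum_mgf_le:
  fixes X :: "'i \<Rightarrow> 'a \<Rightarrow> real"
  assumes fin: "finite I" and indep: "indep_vars (\<lambda>_. borel) X I"
    and binary: "\<And>i \<omega>. i \<in> I \<Longrightarrow> \<omega> \<in> space M \<Longrightarrow> X i \<omega> = 0 \<or> X i \<omega> = 1"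
    and l: "0 \<le> l" "l < 3"
  shows "(\<integral>\<^sup>+\<omega>. ennreal (exp (l * (\<Sum>i\<in>I. X i \<omega> - expectation (X i)))) \<partial>M)
           \<le> ennreal (exp ((\<Sum>i\<in>I. expectation (X i) * (1 - expectation (X i))) * (l\<^sup>2 / (2 * (1 - l / 3)))))"
proof -
  define p where "p i = expectation (X i)" for i
  define c where "c = l\<^sup>2 / (2 * (1 - l / 3))"
  have [measurable]: "X i \<in> borel_measurable M" if "i \<in> I" for i
    using indep that unfolding indep_vars_def by blast
  have "(\<integral>\<^sup>+\<omega>. ennreal (exp (l * (\<Sum>i\<in>I. X i \<omega> - p i))) \<partial>M)
      = (\<integral>\<^sup>+\<omega>. (\<Prod>i\<in>I. ennreal (exp (l * (X i \<omega> - p i)))) \<partial>M)"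
    by (simp add: sum_distrib_left exp_sum fin prod_ennreal)
  also have "\<dots> = (\<Prod>i\<in>I. \<integral>\<^sup>+\<omega>. ennreal (exp (l * (X i \<omega> - p i))) \<partial>M)"
    by (intro indep_vars_nn_integral fin indep_vars_compose2[OF indep]) auto
  also have "\<dots> \<le> (\<Prod>i\<in>I. ennreal (exp (p i * (1 - p i) * c)))"
    unfolding p_def c_def using binary l by (intro prod_mono_ennreal binary_rv_mgf_le) auto
  also have "\<dots> = ennreal (exp ((\<Sum>i\<in>I. p i * (1 - p i)) * c))"
    by (simp add: prod_ennreal exp_sum fin sum_distrib_right)
  finally show ?thesis by (simp add: p_def c_def)
qed

theorem Bernstein_ineq_binary:
  fixes X :: "'i \<Rightarrow> 'a \<Rightarrow> real"
  assumes fin: "finite I" and indep: "indep_vars (\<lambda>_. borel) X I"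
    and binary: "\<And>i \<omega>. i \<in> I \<Longrightarrow> \<omega> \<in> space M \<Longrightarrow> X i \<omega> = 0 \<or> X i \<omega> = 1"
    and L: "L > 0"
    and V: "(\<Sum>i\<in>I. expectation (X i) * (1 - expectation (X i))) \<le> V"
    and thr: "sqrt (2 * V * L) + 2 * L / 3 \<le> thr"
  shows "prob {\<omega>\<in>space M. thr \<le> (\<Sum>i\<in>I. X i \<omega> - expectation (X i))} \<le> exp (- L)"
proof -
  define S where "S \<omega> = (\<Sum>i\<in>I. X i \<omega> - expectation (X i))" for \<omega>
  define Var where "Var = (\<Sum>i\<in>I. expectation (X i) * (1 - expectation (X i)))"
  have X_meas [measurable]: "X i \<in> borel_measurable M" if "i \<in> I" for i
    using indep that unfolding indep_vars_def by blast
  have "0 \<le> expectation (X i) * (1 - expectation (X i))" if "i \<in> I" for i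
    using binary_rv_integrable_expectation(2,3)[OF X_meas[OF that] binary[OF that]] by simp
  then have "0 \<le> V"
    using V by (meson order_trans sum_nonneg)
  then obtain l where l: "0 < l" "l < 3" and exponent: "V * (l\<^sup>2 / (2 * (1 - l / 3))) - l * thr \<le> - L"
    using Bernstein_exponent_exists[OF _ L thr] by blast
  have "emeasure M {\<omega>\<in>space M. thr \<le> S \<omega>}
      \<le> ennreal (exp (- l * thr)) * (\<integral>\<^sup>+\<omega>. ennreal (exp (l * S \<omega>)) * indicator (space M) \<omega> \<partial>M)"
    using l by (intro Chernoff_ineq_nn_integral_ge) (auto simp: S_def)
  also have "(\<integral>\<^sup>+\<omega>. ennreal (exp (l * S \<omega>)) * indicator (space M) \<omega> \<partial>M)
      = (\<integral>\<^sup>+\<omega>. ennreal (exp (l * S \<omega>)) \<partial>M)"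
    by (intro nn_integral_cong) simp
  also have "ennreal (exp (- l * thr)) * \<dots> \<le> ennreal (exp (- l * thr)) * ennreal (exp (Var * (l\<^sup>2 / (2 * (1 - l / 3)))))"
    unfolding S_def Var_def using l by (intro mult_left_mono indep_binary_sum_mgf_le fin indep binary) auto
  also have "\<dots> = ennreal (exp (Var * (l\<^sup>2 / (2 * (1 - l / 3))) - l * thr))"
    by (simp add: mult_exp_exp flip: ennreal_mult)
  also have "\<dots> \<le> ennreal (exp (- L))"
    using mult_right_mono[OF V, of "l\<^sup>2 / (2 * (1 - l / 3))"] exponent l
    by (intro ennreal_leI) (simp add: Var_def)
  finally show ?thesis
    by (simp add: S_def emeasure_eq_measure)
qed

corollary Bernstein_ineq_binary_mean_ge:
  fixes X :: "'i \<Rightarrow> 'a \<Rightarrow> real" and v \<epsilon> :: real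
  assumes fin: "finite I" and ne: "I \<noteq> {}" and indep: "indep_vars (\<lambda>_. borel) X I"
    and binary: "\<And>i \<omega>. i \<in> I \<Longrightarrow> \<omega> \<in> space M \<Longrightarrow> X i \<omega> = 0 \<or> X i \<omega> = 1"
    and L: "L > 0"
    and V: "(\<Sum>i\<in>I. expectation (X i) * (1 - expectation (X i))) \<le> card I * v"
    and \<epsilon>: "Bernstein_radius (card I) v L \<le> \<epsilon>"
  shows "prob {\<omega>\<in>space M. \<epsilon> \<le> (\<Sum>i\<in>I. X i \<omega> - expectation (X i)) / card I} \<le> exp (- L)"
proof -
  define n where "n = real (card I)"
  have n: "n > 0" using fin ne by (simp add: n_def card_gt_0_iff)
  have "sqrt (2 * (n * v) * L) = sqrt (n\<^sup>2 * (2 * v * L / n))"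
    using n by (simp add: power2_eq_square field_simps)
  also have "\<dots> = n * sqrt (2 * v * L / n)"
    using n by (subst real_sqrt_mult) simp
  finally have "sqrt (2 * (n * v) * L) + 2 * L / 3 \<le> n * \<epsilon>"
    using mult_left_mono[OF \<epsilon>[unfolded Bernstein_radius_def] less_imp_le[OF n]] n
    by (simp add: n_def algebra_simps)
  then have "prob {\<omega>\<in>space M. n * \<epsilon> \<le> (\<Sum>i\<in>I. X i \<omega> - expectation (X i))} \<le> exp (- L)"
    using V by (intro Bernstein_ineq_binary[OF fin indep binary L]) (simp_all add: n_def)
  moreover have "n * \<epsilon> \<le> S \<longleftrightarrow> \<epsilon> \<le> S / n" for S
    using n by (simp add: field_simps)
  ultimately show ?thesis by (simp add: n_def)
qed

corollary Bernstein_ineq_binary_mean_le: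
  fixes X :: "'i \<Rightarrow> 'a \<Rightarrow> real" and v \<epsilon> :: real
  assumes fin: "finite I" and ne: "I \<noteq> {}" and indep: "indep_vars (\<lambda>_. borel) X I"
    and binary: "\<And>i \<omega>. i \<in> I \<Longrightarrow> \<omega> \<in> space M \<Longrightarrow> X i \<omega> = 0 \<or> X i \<omega> = 1"
    and L: "L > 0"
    and V: "(\<Sum>i\<in>I. expectation (X i) * (1 - expectation (X i))) \<le> card I * v"
    and \<epsilon>: "Bernstein_radius (card I) v L \<le> \<epsilon>"
  shows "prob {\<omega>\<in>space M. (\<Sum>i\<in>I. X i \<omega> - expectation (X i)) / card I \<le> - \<epsilon>} \<le> exp (- L)"
proof -
  define Y where "Y i \<omega> = 1 - X i \<omega>" for i \<omega>
  have X_meas[measurable]: "X i \<in> borel_measurable M" if "i \<in> I" for i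
    using indep that unfolding indep_vars_def by blast
  have EY: "expectation (Y i) = 1 - expectation (X i)" if "i \<in> I" for i
    unfolding Y_def using binary_rv_integrable_expectation(1)[OF X_meas[OF that] binary[OF that]]
    by (simp add: prob_space)
  have indep_Y: "indep_vars (\<lambda>_. borel) Y I"
    unfolding Y_def by (rule indep_vars_compose2[OF indep, of "\<lambda>_ x. 1 - x"]) simp
  have binary_Y: "Y i \<omega> = 0 \<or> Y i \<omega> = 1" if "i \<in> I" "\<omega> \<in> space M" for i \<omega>
    using binary[OF that] by (auto simp: Y_def)
  have V_Y: "(\<Sum>i\<in>I. expectation (Y i) * (1 - expectation (Y i))) \<le> card I * v"
    using V by (simp add: EY algebra_simps)
  have "prob {\<omega>\<in>space M. \<epsilon> \<le> (\<Sum>i\<in>I. Y i \<omega> - expectation (Y i)) / card I} \<le> exp (- L)"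
    by (rule Bernstein_ineq_binary_mean_ge[OF fin ne indep_Y binary_Y L V_Y \<epsilon>])
  moreover have "(\<Sum>i\<in>I. Y i \<omega> - expectation (Y i)) = - (\<Sum>i\<in>I. X i \<omega> - expectation (X i))" for \<omega>
    unfolding sum_negf[symmetric] by (intro sum.cong) (simp_all add: EY Y_def)
  ultimately show ?thesis
    by (simp add: le_minus_iff)
qed

end

lemma Bernstein_radius_shift_le:
  fixes n L p D :: real
  assumes "n > 0" "L > 0" "p \<ge> 0" "D \<ge> 0"
  shows "Bernstein_radius n (p + D) L \<le> sqrt (2 * p * L / n) + D / 5 + 19 / 6 * (L / n)"
proof -
  have "sqrt (2 * (p + D) * L / n) = sqrt (2 * p * L / n + 2 * D * L / n)"
    by (simp add: algebra_simps add_divide_distrib)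
  also have "\<dots> \<le> sqrt (2 * p * L / n) + sqrt (2 * D * L / n)"
    using assms by (intro sqrt_add_le_add_sqrt) auto
  also have "sqrt (2 * D * L / n) \<le> D / 5 + 5 / 2 * (L / n)"
  proof (rule real_le_lsqrt)
    show "0 \<le> D / 5 + 5 / 2 * (L / n)"
      using assms by simp
    show "2 * D * L / n \<le> (D / 5 + 5 / 2 * (L / n))\<^sup>2"
      using zero_le_power2[of "D / 5 - 5 / 2 * (L / n)"] by (simp add: power2_eq_square algebra_simps)
  qed
  finally show ?thesis by (simp add: Bernstein_radius_def)
qed

corollary Bernstein_radius_self_bound:
  fixes n L p :: real
  assumes "n > 0" "L > 0" "p \<ge> 0"
  defines "e \<equiv> 5 / 4 * sqrt (2 * p * L / n) + 95 / 24 * (L / n)"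
  shows "Bernstein_radius n (p + e) L \<le> e"
proof -
  have "0 \<le> e"
    using assms by (simp add: e_def)
  with assms(1-3) have "Bernstein_radius n (p + e) L \<le> sqrt (2 * p * L / n) + e / 5 + 19 / 6 * (L / n)"
    by (rule Bernstein_radius_shift_le)
  also have "\<dots> = e"
    by (simp add: e_def field_simps)
  finally show ?thesis .
qed

lemma Bernstein_radii_choice:
  fixes n\<^sub>k n\<^sub>i L p \<phi> :: real
  assumes n: "0 < n\<^sub>k" "0 < n\<^sub>i" and L: "0 < L" and "0 \<le> p" "0 \<le> \<phi>"
  shows "\<exists>\<epsilon>\<^sub>k \<epsilon>\<^sub>i. 0 < \<epsilon>\<^sub>k \<and> Bernstein_radius n\<^sub>k (p + \<epsilon>\<^sub>k) L \<le> \<epsilon>\<^sub>k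
           \<and> Bernstein_radius n\<^sub>i (p + (\<epsilon>\<^sub>k + 2 * \<phi>)) L \<le> \<epsilon>\<^sub>i
           \<and> \<epsilon>\<^sub>k + 2 * \<phi> + \<epsilon>\<^sub>i \<le> 12/5 * \<phi> + 6/5 * (5/4 * sqrt (2 * p * L / n\<^sub>k) + 4 * (L / n\<^sub>k))
                                   + 4/5 * (5/4 * sqrt (2 * p * L / n\<^sub>i) + 4 * (L / n\<^sub>i))"
proof (intro exI conjI)
  define \<epsilon>\<^sub>k where "\<epsilon>\<^sub>k = 5 / 4 * sqrt (2 * p * L / n\<^sub>k) + 95 / 24 * (L / n\<^sub>k)"
  have "0 \<le> sqrt (2 * p * L / n\<^sub>k)" "0 < L / n\<^sub>k" "0 < L / n\<^sub>i"
    using assms by simp_all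
  then show "0 < \<epsilon>\<^sub>k"
    unfolding \<epsilon>\<^sub>k_def by linarith
  show "Bernstein_radius n\<^sub>k (p + \<epsilon>\<^sub>k) L \<le> \<epsilon>\<^sub>k"
    unfolding \<epsilon>\<^sub>k_def using assms(1,3,4) by (rule Bernstein_radius_self_bound)
  show "Bernstein_radius n\<^sub>i (p + (\<epsilon>\<^sub>k + 2 * \<phi>)) L
      \<le> sqrt (2 * p * L / n\<^sub>i) + (\<epsilon>\<^sub>k + 2 * \<phi>) / 5 + 19 / 6 * (L / n\<^sub>i)"
    using assms \<open>0 < \<epsilon>\<^sub>k\<close> by (intro Bernstein_radius_shift_le) simp_all
  show "\<epsilon>\<^sub>k + 2 * \<phi> + (sqrt (2 * p * L / n\<^sub>i) + (\<epsilon>\<^sub>k + 2 * \<phi>) / 5 + 19 / 6 * (L / n\<^sub>i))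
      \<le> 12/5 * \<phi> + 6/5 * (5/4 * sqrt (2 * p * L / n\<^sub>k) + 4 * (L / n\<^sub>k))
        + 4/5 * (5/4 * sqrt (2 * p * L / n\<^sub>i) + 4 * (L / n\<^sub>i))"
    unfolding \<epsilon>\<^sub>k_def using \<open>0 < L / n\<^sub>k\<close> \<open>0 < L / n\<^sub>i\<close> by (simp add: field_simps)
qed

lemma sum_Bernoulli_variance_le:
  fixes f :: "'i \<Rightarrow> real" and a :: real
  assumes "finite P" "P \<noteq> {}" and f: "\<And>q. q \<in> P \<Longrightarrow> 0 \<le> f q \<and> f q \<le> 1"
    and a: "0 \<le> a" "a \<le> 1"
  shows "(\<Sum>q\<in>P. f q * (1 - f q)) \<le> card P * (a * (1 - a) + \<bar>(\<Sum>q\<in>P. f q) / card P - a\<bar>)"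
proof -
  define n where "n = real (card P)"
  have n: "n > 0" using assms by (simp add: n_def card_gt_0_iff)
  define G where "G = (\<Sum>q\<in>P. f q) / n"
  have sum_f: "(\<Sum>q\<in>P. f q) = n * G" using n by (simp add: G_def)
  have "0 \<le> G" using f n by (auto simp: G_def intro!: sum_nonneg divide_nonneg_pos)
  moreover have "G \<le> 1"
    using sum_mono[of P f "\<lambda>_. 1"] f n by (simp add: G_def n_def)
  ultimately have G_var: "G * (1 - G) \<le> a * (1 - a) + \<bar>G - a\<bar>"
  proof -
    have "G * (1 - G) - a * (1 - a) = (G - a) * (1 - G - a)"
      by (simp add: algebra_simps)
    also have "\<dots> \<le> \<bar>G - a\<bar> * \<bar>1 - G - a\<bar>"
      by (simp flip: abs_mult)
    also have "\<dots> \<le> \<bar>G - a\<bar>"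
      using \<open>0 \<le> G\<close> \<open>G \<le> 1\<close> a by (intro mult_left_le) auto
    finally show ?thesis by simp
  qed
  have "0 \<le> (\<Sum>q\<in>P. (f q - G)\<^sup>2)"
    by (intro sum_nonneg) simp
  also have "\<dots> = (\<Sum>q\<in>P. (f q)\<^sup>2 - 2 * G * f q + G\<^sup>2)"
    by (intro sum.cong refl) (simp add: power2_diff algebra_simps)
  also have "\<dots> = (\<Sum>q\<in>P. (f q)\<^sup>2) - 2 * G * (\<Sum>q\<in>P. f q) + n * G\<^sup>2"
    by (simp add: sum.distrib sum_subtractf sum_distrib_left n_def)
  finally have "n * G\<^sup>2 \<le> (\<Sum>q\<in>P. (f q)\<^sup>2)"
    using sum_f by (simp add: power2_eq_square algebra_simps)
  then have "(\<Sum>q\<in>P. f q * (1 - f q)) \<le> n * (G * (1 - G))"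
    using sum_f by (simp add: algebra_simps power2_eq_square sum_subtractf)
  also have "\<dots> \<le> n * (a * (1 - a) + \<bar>G - a\<bar>)"
    using G_var n by simp
  finally show ?thesis by (simp add: G_def n_def)
qed

lemma mean_abs_diff_le:
  fixes f :: "'i \<Rightarrow> real"
  assumes "finite P" "P \<noteq> {}" and "\<And>q. q \<in> P \<Longrightarrow> \<bar>f q - c\<bar> \<le> e"
  shows "\<bar>(\<Sum>q\<in>P. f q) / card P - c\<bar> \<le> e"
proof -
  have n: "real (card P) > 0" using assms by (simp add: card_gt_0_iff)
  have "\<bar>(\<Sum>q\<in>P. f q) / card P - c\<bar> = \<bar>\<Sum>q\<in>P. f q - c\<bar> / card P"
    using n by (simp add: sum_subtractf field_simps)
  also have "\<dots> \<le> (\<Sum>q\<in>P. e) / card P"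
    using assms n by (intro divide_right_mono order_trans[OF sum_abs] sum_mono) auto
  finally show ?thesis using n by simp
qed

lemma continuous_attains_between_limits:
  fixes G :: "real \<Rightarrow> real"
  assumes "continuous_on UNIV G" "(G \<longlongrightarrow> a) at_bot" "(G \<longlongrightarrow> b) at_top" "a < c" "c < b"
  shows "\<exists>x. G x = c"
proof -
  obtain x1 where x1: "G x1 < c"
    using order_tendstoD(2)[OF assms(2,4)] by (auto simp: eventually_at_bot_linorder)
  obtain N where "\<And>x. x \<ge> N \<Longrightarrow> G x > c"
    using order_tendstoD(1)[OF assms(3,5)] by (auto simp: eventually_at_top_linorder)
  then obtain x2 where x2: "x1 \<le> x2" "G x2 > c"
    by (metis max.cobounded1 max.cobounded2)
  show ?thesis
    using IVT'[of G x1 c x2] x1 x2 continuous_on_subset[OF assms(1)] by fastforce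
qed

lemma left_quantile_le_iff:
  fixes H :: "real \<Rightarrow> real"
  assumes "mono H" and "\<gamma> \<le> H x\<^sub>0" and "\<And>x. \<gamma> \<le> H x \<Longrightarrow> x\<^sub>0 \<le> x"
  shows "left_quantile H \<gamma> \<le> y \<longleftrightarrow> \<gamma> \<le> H y"
proof -
  have "left_quantile H \<gamma> = x\<^sub>0"
    unfolding left_quantile_def using assms by (intro cInf_eq_minimum) auto
  then show ?thesis
    using assms by (metis monoD order_trans)
qed

lemma step_cdf_level_attained_at_sample:
  fixes v :: "'i \<Rightarrow> real" and P :: "'i set"
  defines "H \<equiv> \<lambda>x. (\<Sum>q\<in>P. if v q \<le> x then 1 else 0) / card P"
  assumes "finite P" "0 < \<gamma>" "\<gamma> \<le> H x"
  shows "\<exists>q\<in>P. v q \<le> x \<and> \<gamma> \<le> H (v q)"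
proof -
  define R where "R = {q\<in>P. v q \<le> x}"
  have "R \<noteq> {}"
  proof
    assume "R = {}"
    then have "H x = 0" by (auto simp: H_def R_def intro: sum.neutral)
    with assms show False by simp
  qed
  define m where "m = Max (v ` R)"
  have "m \<in> v ` R" "finite R"
    using \<open>R \<noteq> {}\<close> \<open>finite P\<close> by (simp_all add: m_def R_def)
  moreover have "v q \<le> m \<longleftrightarrow> v q \<le> x" if "q \<in> P" for q
  proof
    show "v q \<le> x \<Longrightarrow> v q \<le> m"
      using \<open>finite R\<close> that by (auto simp: m_def R_def intro!: Max_ge)
    show "v q \<le> m \<Longrightarrow> v q \<le> x"
      using \<open>m \<in> v ` R\<close> by (auto simp: R_def)
  qed
  then have "H m = H x"
    unfolding H_def by (intro arg_cong2[where f = "(/)"] sum.cong) auto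
  ultimately show ?thesis
    using assms by (auto simp: R_def)
qed

lemma step_cdf_least_level_point:
  fixes v :: "'i \<Rightarrow> real" and P :: "'i set"
  defines "H \<equiv> \<lambda>x. (\<Sum>q\<in>P. if v q \<le> x then 1 else 0) / card P"
  assumes "finite P" "P \<noteq> {}" "0 < \<gamma>" "\<gamma> \<le> 1"
  shows "\<exists>x\<^sub>0. \<gamma> \<le> H x\<^sub>0 \<and> (\<forall>x. \<gamma> \<le> H x \<longrightarrow> x\<^sub>0 \<le> x)"
proof -
  have attained: "\<exists>q\<in>P. v q \<le> x \<and> \<gamma> \<le> H (v q)" if "\<gamma> \<le> H x" for x
    using step_cdf_level_attained_at_sample[of P \<gamma> v x] assms(2,4) that unfolding H_def by blast
  define T where "T = {z \<in> v ` P. \<gamma> \<le> H z}"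
  have "finite T" using \<open>finite P\<close> by (simp add: T_def)
  have "(\<Sum>q\<in>P. if v q \<le> Max (v ` P) then 1 else 0) = (\<Sum>q\<in>P. 1 :: real)"
    using \<open>finite P\<close> by (intro sum.cong) auto
  then have "H (Max (v ` P)) = 1"
    using assms by (simp add: H_def)
  then have "T \<noteq> {}"
    using attained[of "Max (v ` P)"] \<open>\<gamma> \<le> 1\<close> by (auto simp: T_def)
  have "Min T \<le> x" if level: "\<gamma> \<le> H x" for x
  proof -
    obtain q where "q \<in> P" "v q \<le> x" "\<gamma> \<le> H (v q)"
      using attained[OF level] by blast
    then have "Min T \<le> v q"
      using \<open>finite T\<close> by (intro Min_le) (auto simp: T_def)
    with \<open>v q \<le> x\<close> show ?thesis by simp
  qed
  moreover have "\<gamma> \<le> H (Min T)"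
    using Min_in[OF \<open>finite T\<close> \<open>T \<noteq> {}\<close>] by (auto simp: T_def)
  ultimately show ?thesis by blast
qed

lemma psi_eq:
  "psi B \<alpha> t m \<delta> = 5 / 4 * sqrt (2 * (\<alpha> * (1 - \<alpha>)) * ln (2 / \<delta>) / Bwin B t m)
                     + 4 * (ln (2 / \<delta>) / Bwin B t m)"
  by (simp add: psi_def mult.assoc)

lemma abs_cdf_diff_le_sup_dist:
  assumes "real_distribution M" "real_distribution N"
  shows "\<bar>cdf M x - cdf N x\<bar> \<le> sup_dist (cdf M) (cdf N)"
proof -
  interpret M: real_distribution M by fact
  interpret N: real_distribution N by fact
  have "\<bar>cdf M y - cdf N y\<bar> \<le> 1" for y
    using M.cdf_nonneg[of y] M.cdf_bounded_prob[of y] N.cdf_nonneg[of y] N.cdf_bounded_prob[of y]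
    by (simp add: abs_le_iff)
  then show ?thesis
    unfolding sup_dist_def by (intro cSUP_upper bdd_aboveI2) auto
qed

lemma sup_dist_le_phi: "j \<in> {t - m + 1..t} \<Longrightarrow> sup_dist (F j) (F t) \<le> phi F t m"
  unfolding phi_def by (intro Max_ge) auto

definition window :: "(nat \<Rightarrow> nat) \<Rightarrow> nat \<Rightarrow> nat \<Rightarrow> (nat \<times> nat) set" where
  "window B t m = Sigma {t - m + 1..t} (\<lambda>j. {1..B j})"

lemma finite_window [simp]: "finite (window B t m)"
  by (simp add: window_def)

lemma card_window: "card (window B t m) = Bwin B t m"
  by (simp add: window_def Bwin_def card_SigmaI)

lemma emp_cdf_eq_window_mean:
  "emp_cdf B w t m x = (\<Sum>q\<in>window B t m. if w (fst q) (snd q) \<le> x then 1 else 0) / card (window B t m)"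
  unfolding emp_cdf_def card_window unfolding window_def by (simp add: sum.Sigma case_prod_unfold)

lemma emp_cdf_mono: "mono (emp_cdf B w t m)"
  unfolding emp_cdf_eq_window_mean mono_def
  by (auto intro!: divide_right_mono sum_mono)

lemma emp_cdf_bounds: "0 \<le> emp_cdf B w t m x" "emp_cdf B w t m x \<le> 1"
proof -
  have "(\<Sum>q\<in>window B t m. if w (fst q) (snd q) \<le> x then 1 else 0) \<le> real (card (window B t m))"
    using sum_mono[of "window B t m" _ "\<lambda>_. 1 :: real"] by simp
  then show "emp_cdf B w t m x \<le> 1"
    unfolding emp_cdf_eq_window_mean by (cases "window B t m = {}") (simp_all add: divide_le_eq_1 card_gt_0_iff)
  show "0 \<le> emp_cdf B w t m x"
    unfolding emp_cdf_eq_window_mean by (simp add: sum_nonneg)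
qed

lemma emp_quantile_le_iff:
  assumes "Bwin B t m > 0" "0 < \<alpha>" "\<alpha> < 1"
  shows "emp_quantile B w \<alpha> t m \<le> y \<longleftrightarrow> 1 - \<alpha> \<le> emp_cdf B w t m y"
proof -
  have "window B t m \<noteq> {}"
    using assms(1) by (metis card_window card.empty less_irrefl)
  then obtain x\<^sub>0 where "1 - \<alpha> \<le> emp_cdf B w t m x\<^sub>0" "\<And>x. 1 - \<alpha> \<le> emp_cdf B w t m x \<Longrightarrow> x\<^sub>0 \<le> x"
    using step_cdf_least_level_point[of "window B t m" "1 - \<alpha>" "\<lambda>q. w (fst q) (snd q)"] assms
    by (auto simp flip: emp_cdf_eq_window_mean)
  then show ?thesis
    unfolding emp_quantile_def by (intro left_quantile_le_iff emp_cdf_mono)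
qed

locale drifting_samples = prob_space M for M :: "'a measure" +
  fixes Q :: "nat \<Rightarrow> real measure" and u :: "nat \<Rightarrow> nat \<Rightarrow> 'a \<Rightarrow> real"
    and B :: "nat \<Rightarrow> nat" and t :: nat
  assumes t_pos: "1 \<le> t"
    and Q_distr: "\<And>j. j \<in> {1..t} \<Longrightarrow> real_distribution (Q j)"
    and Q_cont: "\<And>j. j \<in> {1..t} \<Longrightarrow> continuous_on UNIV (cdf (Q j))"
    and B_pos: "\<And>j. j \<in> {1..t} \<Longrightarrow> 1 \<le> B j"
    and indep: "indep_vars (\<lambda>_. borel) (\<lambda>(j, l). u j l) {(j, l). j \<in> {1..t} \<and> l \<in> {1..B j}}"
    and u_distr: "\<And>j l. j \<in> {1..t} \<Longrightarrow> l \<in> {1..B j} \<Longrightarrow> distr M borel (u j l) = Q j"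
begin

abbreviation sample :: "'a \<Rightarrow> nat \<Rightarrow> nat \<Rightarrow> real" where
  "sample \<omega> \<equiv> \<lambda>j l. u j l \<omega>"

abbreviation below :: "real \<Rightarrow> nat \<times> nat \<Rightarrow> 'a \<Rightarrow> real" where
  "below x q \<omega> \<equiv> if u (fst q) (snd q) \<omega> \<le> x then 1 else 0"

definition pooled_cdf :: "nat \<Rightarrow> real \<Rightarrow> real" where
  "pooled_cdf m x = (\<Sum>q\<in>window B t m. cdf (Q (fst q)) x) / card (window B t m)"

lemma window_subset: "window B t m \<subseteq> {(j, l). j \<in> {1..t} \<and> l \<in> {1..B j}}"
  by (auto simp: window_def)

lemma window_nonempty: "1 \<le> m \<Longrightarrow> window B t m \<noteq> {}"
proof -
  assume "1 \<le> m"
  then have "(t, 1) \<in> window B t m"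
    using t_pos B_pos[of t] by (simp add: window_def)
  then show ?thesis by blast
qed

lemma fst_window: "q \<in> window B t m \<Longrightarrow> fst q \<in> {1..t}"
  by (auto simp: window_def)

lemma Bwin_pos: "1 \<le> m \<Longrightarrow> 0 < Bwin B t m"
  using window_nonempty by (simp flip: card_window add: card_gt_0_iff)

lemma measurable_sample [measurable]: "q \<in> window B t m \<Longrightarrow> u (fst q) (snd q) \<in> borel_measurable M"
  using indep window_subset unfolding indep_vars_def by (auto simp: case_prod_unfold)

lemma indep_below: "indep_vars (\<lambda>_. borel) (below x) (window B t m)"
  using indep_vars_compose2[OF indep_vars_subset[OF indep window_subset],
      where Y = "\<lambda>_ y. if y \<le> x then 1 else 0 :: real" and N = "\<lambda>_. borel"]
  by (simp add: case_prod_unfold)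

lemma expectation_below: "q \<in> window B t m \<Longrightarrow> expectation (below x q) = cdf (Q (fst q)) x"
proof -
  assume q: "q \<in> window B t m"
  then have "fst q \<in> {1..t}" "snd q \<in> {1..B (fst q)}"
    by (auto simp: window_def)
  then have "distr M borel (u (fst q) (snd q)) = Q (fst q)"
    by (rule u_distr)
  have "expectation (below x q) = expectation (indicator {\<omega>\<in>space M. u (fst q) (snd q) \<omega> \<le> x})"
    by (intro Bochner_Integration.integral_cong) auto
  also have "\<dots> = prob {\<omega>\<in>space M. u (fst q) (snd q) \<omega> \<le> x}"
    using q by simp
  also have "\<dots> = measure (distr M borel (u (fst q) (snd q))) {..x}"
    using q by (subst measure_distr) (auto intro!: arg_cong[where f = "measure M"])
  finally show ?thesis
    using \<open>distr M borel (u (fst q) (snd q)) = Q (fst q)\<close> by (simp add: cdf_def)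
qed

lemma emp_cdf_minus_pooled_cdf:
  "emp_cdf B (sample \<omega>) t m x - pooled_cdf m x
     = (\<Sum>q\<in>window B t m. below x q \<omega> - expectation (below x q)) / card (window B t m)"
  by (simp add: emp_cdf_eq_window_mean pooled_cdf_def expectation_below sum_subtractf diff_divide_distrib)

lemma cdf_Q_bounds: "j \<in> {1..t} \<Longrightarrow> 0 \<le> cdf (Q j) x \<and> cdf (Q j) x \<le> 1"
  using real_distribution.cdf_bounded_prob[OF Q_distr] by (simp add: cdf_def)

lemma sum_variance_below_le:
  fixes a D :: real
  assumes "1 \<le> m" "\<bar>pooled_cdf m x - a\<bar> \<le> D" "0 \<le> a" "a \<le> 1"
  shows "(\<Sum>q\<in>window B t m. expectation (below x q) * (1 - expectation (below x q)))
           \<le> card (window B t m) * (a * (1 - a) + D)"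
proof -
  have "(\<Sum>q\<in>window B t m. expectation (below x q) * (1 - expectation (below x q)))
      = (\<Sum>q\<in>window B t m. cdf (Q (fst q)) x * (1 - cdf (Q (fst q)) x))"
    by (simp add: expectation_below)
  also have "\<dots> \<le> card (window B t m) * (a * (1 - a) + \<bar>pooled_cdf m x - a\<bar>)"
    unfolding pooled_cdf_def using assms window_nonempty cdf_Q_bounds[OF fst_window]
    by (intro sum_Bernoulli_variance_le) auto
  also have "\<dots> \<le> card (window B t m) * (a * (1 - a) + D)"
    using assms by (intro mult_left_mono) auto
  finally show ?thesis .
qed

lemma prob_emp_cdf_deviation:
  fixes a D L \<epsilon> :: real
  assumes m: "1 \<le> m" and D: "\<bar>pooled_cdf m x - a\<bar> \<le> D" "0 \<le> a" "a \<le> 1" and L: "L > 0"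
    and \<epsilon>: "Bernstein_radius (Bwin B t m) (a * (1 - a) + D) L \<le> \<epsilon>"
  shows "prob {\<omega>\<in>space M. pooled_cdf m x + \<epsilon> \<le> emp_cdf B (sample \<omega>) t m x} \<le> exp (- L)"
    and "prob {\<omega>\<in>space M. emp_cdf B (sample \<omega>) t m x \<le> pooled_cdf m x - \<epsilon>} \<le> exp (- L)"
proof -
  note Bernstein = Bernstein_ineq_binary_mean_ge Bernstein_ineq_binary_mean_le
  note assumptions = finite_window window_nonempty[OF m] indep_below _ L
    sum_variance_below_le[OF m D] \<epsilon>[folded card_window]
  have "prob {\<omega>\<in>space M. \<epsilon> \<le> emp_cdf B (sample \<omega>) t m x - pooled_cdf m x} \<le> exp (- L)"
    unfolding emp_cdf_minus_pooled_cdf by (rule Bernstein(1)[OF assumptions]) auto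
  then show "prob {\<omega>\<in>space M. pooled_cdf m x + \<epsilon> \<le> emp_cdf B (sample \<omega>) t m x} \<le> exp (- L)"
    by (simp add: le_diff_eq add.commute)
  have "prob {\<omega>\<in>space M. emp_cdf B (sample \<omega>) t m x - pooled_cdf m x \<le> - \<epsilon>} \<le> exp (- L)"
    unfolding emp_cdf_minus_pooled_cdf by (rule Bernstein(2)[OF assumptions]) auto
  then show "prob {\<omega>\<in>space M. emp_cdf B (sample \<omega>) t m x \<le> pooled_cdf m x - \<epsilon>} \<le> exp (- L)"
    by (simp add: diff_le_eq)
qed

lemma pooled_cdf_attains:
  assumes "1 \<le> m" "0 < c" "c < 1"
  shows "\<exists>x. pooled_cdf m x = c"
proof -
  define n where "n = real (card (window B t m))"
  have n: "n > 0"
    using window_nonempty[OF assms(1)] by (simp add: n_def card_gt_0_iff)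
  have pooled: "pooled_cdf m = (\<lambda>x. (\<Sum>q\<in>window B t m. cdf (Q (fst q)) x) / n)"
    by (simp add: pooled_cdf_def n_def fun_eq_iff)
  have lim_bot: "(cdf (Q j) \<longlongrightarrow> 0) at_bot" and lim_top: "(cdf (Q j) \<longlongrightarrow> 1) at_top"
    if "j \<in> {1..t}" for j
    using real_distribution.cdf_lim_at_top_prob finite_borel_measure.cdf_lim_at_bot
      real_distribution.finite_borel_measure_M Q_distr[OF that] by blast+
  have "continuous_on UNIV (pooled_cdf m)"
    unfolding pooled using n fst_window by (auto intro!: continuous_intros Q_cont)
  moreover have "(pooled_cdf m \<longlongrightarrow> (\<Sum>q\<in>window B t m. 0) / n) at_bot"
    unfolding pooled using fst_window n
    by (intro tendsto_intros) (auto intro: lim_bot)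
  moreover have "(pooled_cdf m \<longlongrightarrow> (\<Sum>q\<in>window B t m. 1) / n) at_top"
    unfolding pooled using fst_window n
    by (intro tendsto_intros) (auto intro: lim_top)
  ultimately show ?thesis
    using continuous_attains_between_limits[of "pooled_cdf m" 0 1 c] assms window_nonempty
    by (simp add: n_def)
qed

lemma pooled_cdf_drift:
  assumes "1 \<le> m" "m \<le> k" "k \<le> t"
  shows "\<bar>pooled_cdf m x - cdf (Q t) x\<bar> \<le> phi (\<lambda>j. cdf (Q j)) t k"
  unfolding pooled_cdf_def
proof (intro mean_abs_diff_le finite_window window_nonempty[OF assms(1)])
  fix q assume q: "q \<in> window B t m"
  then have "fst q \<in> {t - k + 1..t}"
    using assms by (auto simp: window_def)
  moreover have "t \<in> {1..t}"
    using t_pos by simp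
  ultimately show "\<bar>cdf (Q (fst q)) x - cdf (Q t) x\<bar> \<le> phi (\<lambda>j. cdf (Q j)) t k"
    using abs_cdf_diff_le_sup_dist[OF Q_distr[OF fst_window[OF q]] Q_distr] sup_dist_le_phi
    by (meson order_trans)
qed

lemma measurable_emp_cdf [measurable]: "(\<lambda>\<omega>. emp_cdf B (sample \<omega>) t m x) \<in> borel_measurable M"
  unfolding emp_cdf_eq_window_mean
  by (intro borel_measurable_divide borel_measurable_sum borel_measurable_const) measurable

lemma measurable_emp_quantile:
  assumes "1 \<le> m" "0 < \<alpha>" "\<alpha> < 1"
  shows "(\<lambda>\<omega>. emp_quantile B (sample \<omega>) \<alpha> t m) \<in> borel_measurable M"
proof (subst borel_measurable_iff_le, intro allI)
  fix y
  have "{\<omega> \<in> space M. emp_quantile B (sample \<omega>) \<alpha> t m \<le> y}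
      = {\<omega> \<in> space M. 1 - \<alpha> \<le> emp_cdf B (sample \<omega>) t m y}"
    using emp_quantile_le_iff[OF Bwin_pos] assms by auto
  also have "\<dots> \<in> sets M"
    by measurable
  finally show "{\<omega> \<in> space M. emp_quantile B (sample \<omega>) \<alpha> t m \<le> y} \<in> sets M" .
qed

lemma measurable_emp_cdf_at_emp_quantile:
  assumes "1 \<le> k" "0 < \<alpha>" "\<alpha> < 1"
  shows "(\<lambda>\<omega>. emp_cdf B (sample \<omega>) t i (emp_quantile B (sample \<omega>) \<alpha> t k)) \<in> borel_measurable M"
  unfolding emp_cdf_eq_window_mean
proof (intro borel_measurable_divide borel_measurable_sum borel_measurable_const)
  fix q assume "q \<in> window B t i"
  note [measurable] = measurable_sample[OF this] measurable_emp_quantile[OF assms]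
  show "(\<lambda>\<omega>. if u (fst q) (snd q) \<omega> \<le> emp_quantile B (sample \<omega>) \<alpha> t k then 1 else 0 :: real)
          \<in> borel_measurable M"
    by measurable
qed

abbreviation drift :: "nat \<Rightarrow> real" where
  "drift k \<equiv> phi (\<lambda>j. cdf (Q j)) t k"

lemma pooled_cdf_window_diff:
  assumes "1 \<le> i" "i \<le> k" "k \<le> t"
  shows "\<bar>pooled_cdf i x - pooled_cdf k x\<bar> \<le> 2 * drift k"
  using pooled_cdf_drift[of i k x] pooled_cdf_drift[of k k x] assms by linarith

lemma drift_nonneg: "1 \<le> k \<Longrightarrow> k \<le> t \<Longrightarrow> 0 \<le> drift k"
  using pooled_cdf_drift[of k k 0] by linarith

lemma prob_deviations_at_level:
  fixes \<alpha> L \<epsilon>\<^sub>k \<epsilon>\<^sub>i x :: real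
  assumes ik: "1 \<le> i" "i \<le> k" "k \<le> t" and \<alpha>: "0 < \<alpha>" "\<alpha> < 1" and L: "L > 0"
    and \<epsilon>\<^sub>k: "Bernstein_radius (Bwin B t k) (\<alpha> * (1 - \<alpha>) + \<epsilon>\<^sub>k) L \<le> \<epsilon>\<^sub>k"
    and \<epsilon>\<^sub>i: "Bernstein_radius (Bwin B t i) (\<alpha> * (1 - \<alpha>) + (\<epsilon>\<^sub>k + 2 * drift k)) L \<le> \<epsilon>\<^sub>i"
    and x: "\<bar>pooled_cdf k x - (1 - \<alpha>)\<bar> \<le> \<epsilon>\<^sub>k"
  shows "prob {\<omega>\<in>space M. pooled_cdf k x + \<epsilon>\<^sub>k \<le> emp_cdf B (sample \<omega>) t k x} \<le> exp (- L)" (is ?k_above)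
    and "prob {\<omega>\<in>space M. emp_cdf B (sample \<omega>) t k x \<le> pooled_cdf k x - \<epsilon>\<^sub>k} \<le> exp (- L)" (is ?k_below)
    and "prob {\<omega>\<in>space M. pooled_cdf i x + \<epsilon>\<^sub>i \<le> emp_cdf B (sample \<omega>) t i x} \<le> exp (- L)" (is ?i_above)
    and "prob {\<omega>\<in>space M. emp_cdf B (sample \<omega>) t i x \<le> pooled_cdf i x - \<epsilon>\<^sub>i} \<le> exp (- L)" (is ?i_below)
proof -
  have a: "0 \<le> 1 - \<alpha>" "1 - \<alpha> \<le> 1" and var: "\<alpha> * (1 - \<alpha>) = (1 - \<alpha>) * (1 - (1 - \<alpha>))"
    using \<alpha> by simp_all
  have x_i: "\<bar>pooled_cdf i x - (1 - \<alpha>)\<bar> \<le> \<epsilon>\<^sub>k + 2 * drift k"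
    using x pooled_cdf_window_diff[OF ik, of x] by (simp add: abs_le_iff)
  have "1 \<le> k" using ik by simp
  show ?k_above ?k_below
    by (fact prob_emp_cdf_deviation[OF \<open>1 \<le> k\<close> x a L \<epsilon>\<^sub>k[unfolded var]])+
  show ?i_above ?i_below
    by (fact prob_emp_cdf_deviation[OF ik(1) x_i a L \<epsilon>\<^sub>i[unfolded var]])+
qed

lemma Bernstein_radius_bound_nonneg:
  assumes "1 \<le> m" "0 < L" "0 \<le> v" "Bernstein_radius (Bwin B t m) v L \<le> \<epsilon>"
  shows "0 \<le> \<epsilon>"
proof -
  have "0 \<le> sqrt (2 * v * L / Bwin B t m)" "0 \<le> 2 / 3 * (L / Bwin B t m)"
    using assms(2,3) by simp_all
  then show ?thesis
    using assms(4) unfolding Bernstein_radius_def by linarith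
qed

(* Outside the two deviation events the empirical CDF of window k is still below 1 - alpha at x,
   so x lies below the empirical quantile and monotonicity carries the lower bound for window i
   from x to the quantile. *)
lemma quantile_below_event_subset:
  fixes \<alpha> \<epsilon>\<^sub>k \<epsilon>\<^sub>i x :: real
  assumes ik: "1 \<le> i" "i \<le> k" "k \<le> t" and \<alpha>: "0 < \<alpha>" "\<alpha> < 1"
    and x: "pooled_cdf k x = 1 - \<alpha> - \<epsilon>\<^sub>k"
  shows "{\<omega>\<in>space M. emp_cdf B (sample \<omega>) t i (emp_quantile B (sample \<omega>) \<alpha> t k)
                    < 1 - \<alpha> - (\<epsilon>\<^sub>k + 2 * drift k + \<epsilon>\<^sub>i)}
         \<subseteq> {\<omega>\<in>space M. pooled_cdf k x + \<epsilon>\<^sub>k \<le> emp_cdf B (sample \<omega>) t k x}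
           \<union> {\<omega>\<in>space M. emp_cdf B (sample \<omega>) t i x \<le> pooled_cdf i x - \<epsilon>\<^sub>i}"
    (is "?bad \<subseteq> ?deviation")
proof (rule subsetI, rule ccontr)
  fix \<omega> assume bad: "\<omega> \<in> ?bad" and "\<omega> \<notin> ?deviation"
  then have "emp_cdf B (sample \<omega>) t k x < 1 - \<alpha>"
    and "pooled_cdf i x - \<epsilon>\<^sub>i < emp_cdf B (sample \<omega>) t i x"
    using x by auto
  moreover have "x \<le> emp_quantile B (sample \<omega>) \<alpha> t k"
    using calculation(1) emp_quantile_le_iff[OF Bwin_pos, of k \<alpha> "sample \<omega>" x] ik \<alpha> by simp
  then have "emp_cdf B (sample \<omega>) t i x \<le> emp_cdf B (sample \<omega>) t i (emp_quantile B (sample \<omega>) \<alpha> t k)"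
    by (rule monoD[OF emp_cdf_mono])
  ultimately show False
    using bad x pooled_cdf_window_diff[OF ik, of x] by (simp add: abs_le_iff)
qed

lemma quantile_above_event_subset:
  fixes \<alpha> \<epsilon>\<^sub>k \<epsilon>\<^sub>i x :: real
  assumes ik: "1 \<le> i" "i \<le> k" "k \<le> t" and \<alpha>: "0 < \<alpha>" "\<alpha> < 1"
    and x: "pooled_cdf k x = 1 - \<alpha> + \<epsilon>\<^sub>k"
  shows "{\<omega>\<in>space M. 1 - \<alpha> + (\<epsilon>\<^sub>k + 2 * drift k + \<epsilon>\<^sub>i)
                    < emp_cdf B (sample \<omega>) t i (emp_quantile B (sample \<omega>) \<alpha> t k)}
         \<subseteq> {\<omega>\<in>space M. emp_cdf B (sample \<omega>) t k x \<le> pooled_cdf k x - \<epsilon>\<^sub>k}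
           \<union> {\<omega>\<in>space M. pooled_cdf i x + \<epsilon>\<^sub>i \<le> emp_cdf B (sample \<omega>) t i x}"
    (is "?bad \<subseteq> ?deviation")
proof (rule subsetI, rule ccontr)
  fix \<omega> assume bad: "\<omega> \<in> ?bad" and "\<omega> \<notin> ?deviation"
  then have "1 - \<alpha> < emp_cdf B (sample \<omega>) t k x"
    and "emp_cdf B (sample \<omega>) t i x < pooled_cdf i x + \<epsilon>\<^sub>i"
    using x by auto
  moreover have "emp_quantile B (sample \<omega>) \<alpha> t k \<le> x"
    using calculation(1) emp_quantile_le_iff[OF Bwin_pos, of k \<alpha> "sample \<omega>" x] ik \<alpha> by simp
  then have "emp_cdf B (sample \<omega>) t i (emp_quantile B (sample \<omega>) \<alpha> t k) \<le> emp_cdf B (sample \<omega>) t i x"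
    by (rule monoD[OF emp_cdf_mono])
  ultimately show False
    using bad x pooled_cdf_window_diff[OF ik, of x] by (simp add: abs_le_iff)
qed

lemma drift_radius_nonneg:
  fixes \<alpha> L \<epsilon>\<^sub>k \<epsilon>\<^sub>i :: real
  assumes ik: "1 \<le> i" "i \<le> k" "k \<le> t" and \<alpha>: "0 < \<alpha>" "\<alpha> < 1" and L: "L > 0" and "0 < \<epsilon>\<^sub>k"
    and \<epsilon>\<^sub>i: "Bernstein_radius (Bwin B t i) (\<alpha> * (1 - \<alpha>) + (\<epsilon>\<^sub>k + 2 * drift k)) L \<le> \<epsilon>\<^sub>i"
  shows "0 \<le> drift k" "0 \<le> \<epsilon>\<^sub>i"
proof -
  show "0 \<le> drift k"
    using drift_nonneg ik by simp
  then show "0 \<le> \<epsilon>\<^sub>i"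
    using ik \<alpha> \<open>0 < \<epsilon>\<^sub>k\<close>
    by (intro Bernstein_radius_bound_nonneg[OF _ L _ \<epsilon>\<^sub>i]) simp_all
qed

lemma prob_emp_cdf_at_quantile_below:
  fixes \<alpha> L \<epsilon>\<^sub>k \<epsilon>\<^sub>i :: real
  assumes ik: "1 \<le> i" "i \<le> k" "k \<le> t" and \<alpha>: "0 < \<alpha>" "\<alpha> < 1" and L: "L > 0" and "0 < \<epsilon>\<^sub>k"
    and \<epsilon>\<^sub>k: "Bernstein_radius (Bwin B t k) (\<alpha> * (1 - \<alpha>) + \<epsilon>\<^sub>k) L \<le> \<epsilon>\<^sub>k"
    and \<epsilon>\<^sub>i: "Bernstein_radius (Bwin B t i) (\<alpha> * (1 - \<alpha>) + (\<epsilon>\<^sub>k + 2 * drift k)) L \<le> \<epsilon>\<^sub>i"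
  shows "prob {\<omega>\<in>space M. emp_cdf B (sample \<omega>) t i (emp_quantile B (sample \<omega>) \<alpha> t k)
                           < 1 - \<alpha> - (\<epsilon>\<^sub>k + 2 * drift k + \<epsilon>\<^sub>i)} \<le> 2 * exp (- L)"
    (is "prob ?bad \<le> _")
proof (cases "1 - \<alpha> - \<epsilon>\<^sub>k \<le> 0")
  case True
  have "\<not> emp_cdf B w t i y < 1 - \<alpha> - (\<epsilon>\<^sub>k + 2 * drift k + \<epsilon>\<^sub>i)" for w y
    using True emp_cdf_bounds(1)[of B w t i y] drift_radius_nonneg[OF assms(1-7,9)] by linarith
  then have "?bad = {}"
    by blast
  then show ?thesis
    by (simp only: measure_empty) simp
next
  case False
  then obtain x where x: "pooled_cdf k x = 1 - \<alpha> - \<epsilon>\<^sub>k"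
    using pooled_cdf_attains[of k "1 - \<alpha> - \<epsilon>\<^sub>k"] ik \<alpha> \<open>0 < \<epsilon>\<^sub>k\<close> by auto
  then have "\<bar>pooled_cdf k x - (1 - \<alpha>)\<bar> \<le> \<epsilon>\<^sub>k"
    using \<open>0 < \<epsilon>\<^sub>k\<close> by simp
  note deviations = prob_deviations_at_level[OF ik \<alpha> L \<epsilon>\<^sub>k \<epsilon>\<^sub>i this]
  have "prob ?bad \<le> prob {\<omega>\<in>space M. pooled_cdf k x + \<epsilon>\<^sub>k \<le> emp_cdf B (sample \<omega>) t k x}
                   + prob {\<omega>\<in>space M. emp_cdf B (sample \<omega>) t i x \<le> pooled_cdf i x - \<epsilon>\<^sub>i}"
    by (intro prob_le_add_if_subset_Un quantile_below_event_subset[OF ik \<alpha> x]) simp_all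
  also have "\<dots> \<le> exp (- L) + exp (- L)"
    using deviations(1,4) by (rule add_mono)
  finally show ?thesis by simp
qed

lemma prob_emp_cdf_at_quantile_above:
  fixes \<alpha> L \<epsilon>\<^sub>k \<epsilon>\<^sub>i :: real
  assumes ik: "1 \<le> i" "i \<le> k" "k \<le> t" and \<alpha>: "0 < \<alpha>" "\<alpha> < 1" and L: "L > 0" and "0 < \<epsilon>\<^sub>k"
    and \<epsilon>\<^sub>k: "Bernstein_radius (Bwin B t k) (\<alpha> * (1 - \<alpha>) + \<epsilon>\<^sub>k) L \<le> \<epsilon>\<^sub>k"
    and \<epsilon>\<^sub>i: "Bernstein_radius (Bwin B t i) (\<alpha> * (1 - \<alpha>) + (\<epsilon>\<^sub>k + 2 * drift k)) L \<le> \<epsilon>\<^sub>i"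
  shows "prob {\<omega>\<in>space M. 1 - \<alpha> + (\<epsilon>\<^sub>k + 2 * drift k + \<epsilon>\<^sub>i)
                           < emp_cdf B (sample \<omega>) t i (emp_quantile B (sample \<omega>) \<alpha> t k)} \<le> 2 * exp (- L)"
    (is "prob ?bad \<le> _")
proof (cases "1 \<le> 1 - \<alpha> + \<epsilon>\<^sub>k")
  case True
  have "\<not> 1 - \<alpha> + (\<epsilon>\<^sub>k + 2 * drift k + \<epsilon>\<^sub>i) < emp_cdf B w t i y" for w y
    using True emp_cdf_bounds(2)[of B w t i y] drift_radius_nonneg[OF assms(1-7,9)] by linarith
  then have "?bad = {}"
    by blast
  then show ?thesis
    by (simp only: measure_empty) simp
next
  case False
  then obtain x where x: "pooled_cdf k x = 1 - \<alpha> + \<epsilon>\<^sub>k"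
    using pooled_cdf_attains[of k "1 - \<alpha> + \<epsilon>\<^sub>k"] ik \<alpha> \<open>0 < \<epsilon>\<^sub>k\<close> by auto
  then have "\<bar>pooled_cdf k x - (1 - \<alpha>)\<bar> \<le> \<epsilon>\<^sub>k"
    using \<open>0 < \<epsilon>\<^sub>k\<close> by simp
  note deviations = prob_deviations_at_level[OF ik \<alpha> L \<epsilon>\<^sub>k \<epsilon>\<^sub>i this]
  have "prob ?bad \<le> prob {\<omega>\<in>space M. emp_cdf B (sample \<omega>) t k x \<le> pooled_cdf k x - \<epsilon>\<^sub>k}
                   + prob {\<omega>\<in>space M. pooled_cdf i x + \<epsilon>\<^sub>i \<le> emp_cdf B (sample \<omega>) t i x}"
    by (intro prob_le_add_if_subset_Un quantile_above_event_subset[OF ik \<alpha> x]) simp_all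
  also have "\<dots> \<le> exp (- L) + exp (- L)"
    using deviations(2,3) by (rule add_mono)
  finally show ?thesis by simp
qed

lemma prob_emp_cdf_at_quantile_close:
  fixes \<alpha> L \<epsilon>\<^sub>k \<epsilon>\<^sub>i r :: real
  assumes ik: "1 \<le> i" "i \<le> k" "k \<le> t" and \<alpha>: "0 < \<alpha>" "\<alpha> < 1" and L: "L > 0" and "0 < \<epsilon>\<^sub>k"
    and \<epsilon>\<^sub>k: "Bernstein_radius (Bwin B t k) (\<alpha> * (1 - \<alpha>) + \<epsilon>\<^sub>k) L \<le> \<epsilon>\<^sub>k"
    and \<epsilon>\<^sub>i: "Bernstein_radius (Bwin B t i) (\<alpha> * (1 - \<alpha>) + (\<epsilon>\<^sub>k + 2 * drift k)) L \<le> \<epsilon>\<^sub>i"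
    and r: "\<epsilon>\<^sub>k + 2 * drift k + \<epsilon>\<^sub>i \<le> r"
  shows "1 - 4 * exp (- L) \<le> prob {\<omega>\<in>space M.
           \<bar>emp_cdf B (sample \<omega>) t i (emp_quantile B (sample \<omega>) \<alpha> t k) - (1 - \<alpha>)\<bar> \<le> r}"
    (is "_ \<le> prob ?good")
proof -
  define Low where "Low = {\<omega>\<in>space M. emp_cdf B (sample \<omega>) t i (emp_quantile B (sample \<omega>) \<alpha> t k)
                                        < 1 - \<alpha> - (\<epsilon>\<^sub>k + 2 * drift k + \<epsilon>\<^sub>i)}"
  define High where "High = {\<omega>\<in>space M. 1 - \<alpha> + (\<epsilon>\<^sub>k + 2 * drift k + \<epsilon>\<^sub>i)
                                        < emp_cdf B (sample \<omega>) t i (emp_quantile B (sample \<omega>) \<alpha> t k)}"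
  have "1 \<le> k" using ik by simp
  note [measurable] = measurable_emp_cdf_at_emp_quantile[OF this \<alpha>]
  have "space M - (Low \<union> High) \<subseteq> ?good"
    using r by (auto simp: Low_def High_def abs_le_iff)
  then have "prob (space M - (Low \<union> High)) \<le> prob ?good"
    by (rule finite_measure_mono) measurable
  moreover have "prob (space M - (Low \<union> High)) = 1 - prob (Low \<union> High)"
    by (rule prob_compl) (simp add: Low_def High_def)
  moreover have "prob (Low \<union> High) \<le> prob Low + prob High"
    by (intro prob_le_add_if_subset_Un) (simp_all add: Low_def High_def)
  moreover have "prob Low \<le> 2 * exp (- L)" "prob High \<le> 2 * exp (- L)"
    unfolding Low_def High_def using assms
    by (intro prob_emp_cdf_at_quantile_below prob_emp_cdf_at_quantile_above; simp)+
  ultimately show ?thesis by linarith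
qed

end

theorem theorem2:
  fixes M :: "'a measure" and Q :: "nat \<Rightarrow> real measure"
    and u :: "nat \<Rightarrow> nat \<Rightarrow> 'a \<Rightarrow> real" and B :: "nat \<Rightarrow> nat"
    and t i k :: nat and \<alpha> \<delta> :: real
  assumes "prob_space M"
    and "t \<ge> 1"
    and "0 < \<alpha>" and "\<alpha> < 1"
    and Q_prob: "\<And>j. j \<in> {1..t} \<Longrightarrow> prob_space (Q j)"
    and Q_sets: "\<And>j. j \<in> {1..t} \<Longrightarrow> sets (Q j) = sets borel"
    and Q_cont: "\<And>j. j \<in> {1..t} \<Longrightarrow> continuous_on UNIV (cdf (Q j))"
    and B_pos: "\<And>j. j \<in> {1..t} \<Longrightarrow> B j \<ge> 1"
    and indep: "prob_space.indep_vars M (\<lambda>_. borel) (\<lambda>(j, l). u j l)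
                  {(j, l). j \<in> {1..t} \<and> l \<in> {1..B j}}"
    and distr: "\<And>j l. j \<in> {1..t} \<Longrightarrow> l \<in> {1..B j} \<Longrightarrow> distr M borel (u j l) = Q j"
    and "1 \<le> i" and "i \<le> k" and "k \<le> t"
    and "0 < \<delta>" and "\<delta> < 1"
  shows "measure M {\<omega> \<in> space M.
           \<bar>emp_cdf B (\<lambda>j l. u j l \<omega>) t i (emp_quantile B (\<lambda>j l. u j l \<omega>) \<alpha> t k) - (1 - \<alpha>)\<bar>
             \<le> 12/5 * phi (\<lambda>j. cdf (Q j)) t k + 6/5 * psi B \<alpha> t k (\<delta>/2)
                + 4/5 * psi B \<alpha> t i (\<delta>/2)} \<ge> 1 - \<delta>"
proof -
  have "real_distribution (Q j)" if "j \<in> {1..t}" for j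
    using Q_prob[OF that] Q_sets[OF that] by (simp add: real_distribution_def real_distribution_axioms_def)
  then interpret drifting_samples M Q u B t
    using assms(1,2) Q_cont B_pos indep distr
    by (intro drifting_samples.intro drifting_samples_axioms.intro) simp_all
  have ik: "1 \<le> i" "i \<le> k" "k \<le> t" and \<alpha>: "0 < \<alpha>" "\<alpha> < 1"
    using assms by simp_all
  define L where "L = ln (4 / \<delta>)"
  have L: "0 < L" "exp (- L) = \<delta> / 4" "ln (2 / (\<delta> / 2)) = L"
    using \<open>0 < \<delta>\<close> \<open>\<delta> < 1\<close> by (simp_all add: L_def exp_minus)
  have "0 < real (Bwin B t k)" "0 < real (Bwin B t i)" "0 \<le> \<alpha> * (1 - \<alpha>)" "0 \<le> drift k"
    using Bwin_pos drift_nonneg ik \<alpha> by simp_all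
  then obtain \<epsilon>\<^sub>k \<epsilon>\<^sub>i where "0 < \<epsilon>\<^sub>k"
    and "Bernstein_radius (Bwin B t k) (\<alpha> * (1 - \<alpha>) + \<epsilon>\<^sub>k) L \<le> \<epsilon>\<^sub>k"
    and "Bernstein_radius (Bwin B t i) (\<alpha> * (1 - \<alpha>) + (\<epsilon>\<^sub>k + 2 * drift k)) L \<le> \<epsilon>\<^sub>i"
    and "\<epsilon>\<^sub>k + 2 * drift k + \<epsilon>\<^sub>i
           \<le> 12/5 * drift k + 6/5 * psi B \<alpha> t k (\<delta>/2) + 4/5 * psi B \<alpha> t i (\<delta>/2)"
    using Bernstein_radii_choice[of "Bwin B t k" "Bwin B t i" L "\<alpha> * (1 - \<alpha>)" "drift k"] L
    by (auto simp: psi_eq)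
  from prob_emp_cdf_at_quantile_close[OF ik \<alpha> L(1) this] show ?thesis
    by (simp add: L(2))
qed

end
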